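(* Let $M$ be a rational $\mathbb G_a$-module over $k$ of degree $<p^r$. Then for any finite sequence $\underline a=(a_0,a_1,\dots)$ in $k$, with $\underline b=(b_0,\dots,b_{r-1}):=(a_{r-1},\dots,a_0)$, the action of $\sum_{s\ge0}a_s^{p^s}u_s$ on $M$ equals the action of $\sum_{i=0}^{r-1}b_{r-1-i}^{p^i}u_i$ on $M$; the latter element of $k\mathbb G_{a(r)}=k[u_0,\dots,u_{r-1}]/(u_i^p)$ is the sum of the terms linear in the $u_i$ of $(\sigma_{\underline b}\circ i_r)_*(u_{r-1})$. In other words, the action of $\mathbb G_a$ on $M$ at $\sigma_{\underline a}$ equals the linearization of the action of $\mathbb G_{a(r)}$ on $M$ at $\sigma_{\underline b}\circ i_r$.
   Context: $k$ is an algebraically closed field of characteristic $p>0$. $\mathbb G_a$ is the additive group, $k[\mathbb G_a]=k[T]$; $\mathbb G_{a(r)}$ its $r$-th Frobenius kernel, $k[\mathbb G_{a(r)}]=k[T]/(T^{p^r})$, inclusion $i_r$. $k\mathbb G_a=k[u_0,u_1,\dots]/(u_i^p)$ with $u_i$ the functional reading off the coefficient of $T^{p^i}$; $k\mathbb G_{a(r)}=k[u_0,\dots,u_{r-1}]/(u_i^p)$; a homomorphism $\psi$ induces $\psi_*$ on group algebras. A rational $\mathbb G_a$-module is a comodule $\Delta_M:M\to M\otimes k[T]$, a $k\mathbb G_a$-module via $\phi\cdot m=\sum\phi(f_i)m_i$ when $\Delta_M(m)=\sum m_i\otimes f_i$; degree $<p^r$ means $\Delta_M(M)\subset M\otimes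 k[T]_{<p^r}$. For a finite sequence $\underline a$, $\sigma_{\underline a}:\mathbb G_a\to\mathbb G_a$ is $T\mapsto\sum_sa_sT^{p^s}$. The action of $\mathbb G_a$ on $M$ at $\sigma_{\underline a}$ is that of $\sum_sa_s^{p^s}u_s$; the action of $\mathbb G_{a(r)}$ on $M$ at $\mu:\mathbb G_{a(r)}\to\mathbb G_a$ is that of $\mu_*(u_{r-1})$. *)

theory Defs
  imports "HOL-Computational_Algebra.Polynomial"
begin

text \<open>A rational G_a-module M with comodule map Delta_M : M -> M (x) k[T] is encoded
  by the coefficient maps D n : M -> M, where Delta_M(m) = sum_n (D n m) (x) T^n.
  The comodule axioms read: each D n is k-linear, each m has finitely many nonzero
  D n m, counit: D 0 = id, coassociativity (with Delta(T) = T(x)1 + 1(x)T):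
  D i (D j m) = (i+j choose i) D (i+j) m.\<close>

definition Ga_module :: "('k::field \<Rightarrow> 'm::ab_group_add \<Rightarrow> 'm) \<Rightarrow> (nat \<Rightarrow> 'm \<Rightarrow> 'm) \<Rightarrow> bool" where
  "Ga_module scale D \<longleftrightarrow>
     vector_space scale \<and>
     (\<forall>n. Vector_Spaces.linear scale scale (D n)) \<and>
     (\<forall>m. finite {n. D n m \<noteq> 0}) \<and>
     (\<forall>m. D 0 m = m) \<and>
     (\<forall>i j m. D i (D j m) = scale (of_nat ((i + j) choose i)) (D (i + j) m))"

definition degree_less :: "(nat \<Rightarrow> 'm::zero \<Rightarrow> 'm) \<Rightarrow> nat \<Rightarrow> bool" where
  "degree_less D N \<longleftrightarrow> (\<forall>n m. N \<le> n \<longrightarrow> D n m = 0)"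

text \<open>An element phi of kG_a (a linear functional on k[T]) is encoded by its values
  on the monomial basis: phi n = phi(T^n).  Elements of kG_{a(r)} are those functionals
  vanishing on T^n for n >= p^r (functionals on k[T]/(T^{p^r})).\<close>

definition act :: "('k::field \<Rightarrow> 'm::ab_group_add \<Rightarrow> 'm) \<Rightarrow> (nat \<Rightarrow> 'm \<Rightarrow> 'm) \<Rightarrow> (nat \<Rightarrow> 'k) \<Rightarrow> 'm \<Rightarrow> 'm" where
  "act scale D \<phi> m = (\<Sum>n\<in>{n. D n m \<noteq> 0}. scale (\<phi> n) (D n m))"

definition u :: "nat \<Rightarrow> nat \<Rightarrow> nat \<Rightarrow> 'k::field" where
  "u p i n = (if n = p ^ i then 1 else 0)"

text \<open>Multiplication of kG_a, dual to the comultiplication T |-> T(x)1 + 1(x)T.\<close>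
definition conv :: "(nat \<Rightarrow> 'k::field) \<Rightarrow> (nat \<Rightarrow> 'k) \<Rightarrow> nat \<Rightarrow> 'k" where
  "conv \<phi> \<psi> n = (\<Sum>j\<le>n. of_nat (n choose j) * \<phi> j * \<psi> (n - j))"

text \<open>Unit of kG_a: the counit (evaluation at 0).\<close>
definition gunit :: "nat \<Rightarrow> 'k::field" where
  "gunit n = (if n = 0 then 1 else 0)"

fun gpow :: "(nat \<Rightarrow> 'k::field) \<Rightarrow> nat \<Rightarrow> nat \<Rightarrow> 'k" where
  "gpow \<phi> 0 = gunit"
| "gpow \<phi> (Suc j) = conv \<phi> (gpow \<phi> j)"

fun umon :: "nat \<Rightarrow> nat \<Rightarrow> (nat \<Rightarrow> nat) \<Rightarrow> nat \<Rightarrow> 'k::field" where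
  "umon p 0 e = gunit"
| "umon p (Suc r) e = conv (umon p r e) (gpow (u p r) (e r))"

definition exps :: "nat \<Rightarrow> nat \<Rightarrow> (nat \<Rightarrow> nat) set" where
  "exps p r = {e. (\<forall>i<r. e i < p) \<and> (\<forall>i\<ge>r. e i = 0)}"

definition unitvec :: "nat \<Rightarrow> nat \<Rightarrow> nat" where
  "unitvec i = (\<lambda>j. if j = i then 1 else 0)"

text \<open>The sum of the terms linear in the u_i of an element of
  kG_{a(r)} = k[u_0,...,u_{r-1}]/(u_i^p), computed from its (unique) expansion in the
  monomial basis.\<close>
definition linear_part :: "nat \<Rightarrow> nat \<Rightarrow> (nat \<Rightarrow> 'k::field) \<Rightarrow> nat \<Rightarrow> 'k" where
  "linear_part p r \<phi> =
     (let c = (THE c. (\<forall>e. e \<notin> exps p r \<longrightarrow> c e = 0) \<and>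
                      (\<forall>n. \<phi> n = (\<Sum>e\<in>exps p r. c e * umon p r e n)))
      in (\<lambda>n. \<Sum>i<r. c (unitvec i) * u p i n))"

definition seq_nth :: "'k::zero list \<Rightarrow> nat \<Rightarrow> 'k" where
  "seq_nth xs s = (if s < length xs then xs ! s else 0)"

definition sigma :: "nat \<Rightarrow> 'k::field list \<Rightarrow> 'k poly" where
  "sigma p a = (\<Sum>s<length a. monom (a ! s) (p ^ s))"

text \<open>For mu = sigma_b o i_r : G_{a(r)} -> G_a, with comorphism
  k[T] -> k[T]/(T^{p^r}), f |-> f(sigma_b(T)) mod T^{p^r}, the induced map
  mu_* : kG_{a(r)} -> kG_a, psi |-> psi o mu^*.\<close>
definition push_r :: "nat \<Rightarrow> nat \<Rightarrow> 'k::field poly \<Rightarrow> (nat \<Rightarrow> 'k) \<Rightarrow> nat \<Rightarrow> 'k" where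
  "push_r p r q \<psi> N = (\<Sum>n<p ^ r. \<psi> n * coeff (pcompose (monom 1 N) q) n)"

definition ulin :: "nat \<Rightarrow> nat \<Rightarrow> (nat \<Rightarrow> 'k::field) \<Rightarrow> nat \<Rightarrow> 'k" where
  "ulin p L c n = (\<Sum>s<L. c s * u p s n)"

end

theory Submission
  imports Defs "HOL-Computational_Algebra.Primes"
begin

text \<open>In characteristic \<open>p\<close> the functional \<open>u\<^sub>i\<close> is the Dirac functional at \<open>T^(p^i)\<close>, and
  by one step of Lucas' theorem the convolution of Dirac functionals at \<open>x < p^r\<close> and at
  \<open>e p^r\<close> is a unit multiple of the Dirac functional at \<open>x + e p^r\<close>. Hence the monomial
  \<open>u\<^sup>e\<close> of \<open>k[u\<^sub>0,...,u\<^sub>r\<^sub>-\<^sub>1]/(u\<^sub>i\<^sup>p)\<close> is \<open>\<Prod>e\<^sub>i!\<close> times the Dirac functional at the number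
  with base-\<open>p\<close> digits \<open>e\<close>: up to units the monomials are the basis dual to
  \<open>1, T, ..., T^(p^r - 1)\<close>, and the linear part of a functional \<open>\<phi>\<close> on \<open>k[T]/(T^(p^r))\<close> is
  \<open>\<Sum>\<^sub>i \<phi>(T^(p^i)) u\<^sub>i\<close>. For \<open>\<phi> = (\<sigma>\<^sub>b \<circ> i\<^sub>r)\<^sub>*(u\<^sub>r\<^sub>-\<^sub>1)\<close> the value \<open>\<phi>(T^(p^i))\<close> is the
  coefficient of \<open>T^(p^(r-1))\<close> in \<open>\<sigma>\<^sub>b(T)^(p^i) = \<Sum>\<^sub>s b\<^sub>s^(p^i) T^(p^(s+i))\<close>, namely
  \<open>b\<^sub>r\<^sub>-\<^sub>1\<^sub>-\<^sub>i^(p^i)\<close>. On the module side, a module of degree \<open>< p^r\<close> only sees the values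
  of a functional at \<open>T^n\<close> with \<open>n < p^r\<close>, where \<open>u\<^sub>s\<close> vanishes for \<open>s \<ge> r\<close>.\<close>

lemma coeff_one_plus_X_power: "coeff ([:1, 1:] ^ n :: 'a::comm_semiring_1 poly) k = of_nat (n choose k)"
proof (cases "k \<le> n")
  case False
  then have "degree ([:1, 1:] ^ n :: 'a poly) < k"
    using degree_power_le[of "[:1, 1:] :: 'a poly" n] by (auto intro: le_less_trans)
  then show ?thesis using False by (simp add: coeff_eq_0 binomial_eq_0)
qed (simp add: coeff_linear_poly_power)

lemma one_plus_X_power_CHAR:
  assumes "prime CHAR('k::comm_ring_1)" "P = CHAR('k) ^ i"
  shows "([:1, 1:] :: 'k poly) ^ P = 1 + monom 1 P"
proof -
  have "([:1, 1:] :: 'k poly) = 1 + monom 1 1"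
    by (simp add: poly_eq_iff coeff_monom coeff_pCons split: nat.split)
  moreover have "(1 + monom 1 1 :: 'k poly) ^ P = 1 ^ P + monom 1 1 ^ P"
    by (rule freshmans_dream') (use assms in simp_all)
  ultimately show ?thesis by (simp add: monom_power)
qed

lemma binomial_digits_CHAR:
  assumes "prime CHAR('k::field)" "P = CHAR('k) ^ i" "a < P" "c < P"
  shows "(of_nat ((a + b * P) choose (c + d * P)) :: 'k) = of_nat (a choose c) * of_nat (b choose d)"
proof -
  have "(1 + monom 1 P :: 'k poly) ^ b = (\<Sum>j\<le>b. smult (of_nat (b choose j)) (monom 1 (P * j)))"
    by (simp add: add.commute[of 1] binomial_ring monom_power of_nat_poly smult_monom)
  then have expand: "([:1, 1:] :: 'k poly) ^ (a + b * P)
      = (\<Sum>j\<le>b. smult (of_nat (b choose j)) (monom 1 (P * j) * [:1, 1:] ^ a))"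
    using assms(1,2)
    by (simp add: power_add power_mult mult.commute[of b] one_plus_X_power_CHAR sum_distrib_left
        mult_smult_right mult.commute[of "[:1, 1:] ^ a"])
  have coeff_term: "coeff (monom 1 (P * j) * [:1, 1:] ^ a :: 'k poly) (c + d * P)
      = (if j = d then of_nat (a choose c) else 0)" for j
  proof (cases j d rule: linorder_cases)
    case less
    then have "P * j + P \<le> d * P" using mult_le_mono1[of "Suc j" d P] by (simp add: mult.commute)
    then have "a < c + d * P - P * j" using assms(3) by linarith
    then show ?thesis using less by (simp add: coeff_monom_mult coeff_one_plus_X_power binomial_eq_0)
  next
    case equal then show ?thesis by (simp add: coeff_monom_mult coeff_one_plus_X_power mult.commute)
  next
    case greater
    then have "d * P + P \<le> P * j" using mult_le_mono1[of "Suc d" j P] by (simp add: mult.commute)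
    then have "c + d * P < P * j" using assms(4) by linarith
    then show ?thesis using greater by (simp add: coeff_monom_mult)
  qed
  have "(of_nat ((a + b * P) choose (c + d * P)) :: 'k) = coeff ([:1, 1:] ^ (a + b * P)) (c + d * P)"
    by (simp add: coeff_one_plus_X_power)
  also have "\<dots> = (\<Sum>j\<le>b. of_nat (b choose j) * (if j = d then of_nat (a choose c) else 0))"
    by (simp add: expand coeff_sum coeff_term del: of_nat_mult)
  also have "\<dots> = of_nat (a choose c) * of_nat (b choose d)"
    by (cases "d \<le> b") (simp_all add: if_distrib binomial_eq_0 cong: if_cong)
  finally show ?thesis .
qed

definition dirac :: "nat \<Rightarrow> 'k::field \<Rightarrow> nat \<Rightarrow> 'k" where
  "dirac x c = (\<lambda>n. if n = x then c else 0)"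

lemma u_eq_dirac: "u p i = dirac (p ^ i) 1"
  by (simp add: u_def dirac_def fun_eq_iff)

lemma gunit_eq_dirac: "gunit = dirac 0 1"
  by (simp add: gunit_def dirac_def fun_eq_iff)

lemma conv_dirac:
  "conv (dirac x \<alpha>) (dirac y \<beta>) = dirac (x + y) (of_nat ((x + y) choose x) * \<alpha> * \<beta>)"
proof
  fix n
  have "conv (dirac x \<alpha>) (dirac y \<beta>) n
      = (\<Sum>j\<le>n. if j = x then of_nat (n choose x) * \<alpha> * dirac y \<beta> (n - x) else 0)"
    unfolding conv_def by (rule sum.cong) (auto simp: dirac_def)
  also have "\<dots> = dirac (x + y) (of_nat ((x + y) choose x) * \<alpha> * \<beta>) n"
    by (auto simp: dirac_def)
  finally show "conv (dirac x \<alpha>) (dirac y \<beta>) n = dirac (x + y) (of_nat ((x + y) choose x) * \<alpha> * \<beta>) n" .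
qed

lemma gpow_u:
  assumes "prime CHAR('k::field)" "p = CHAR('k)"
  shows "gpow (u p i) j = dirac (j * p ^ i) (of_nat (fact j) :: 'k)"
proof (induction j)
  case 0
  then show ?case by (simp add: gunit_eq_dirac)
next
  case (Suc j)
  have "(of_nat ((p ^ i + j * p ^ i) choose p ^ i) :: 'k) = of_nat (Suc j)"
    using binomial_digits_CHAR[OF assms(1), of "p ^ i" i 0 0 "Suc j" 1] assms(1,2) prime_gt_0_nat
    by simp
  then show ?case by (subst gpow.simps, subst Suc) (simp add: u_eq_dirac conv_dirac algebra_simps)
qed

definition from_digits :: "nat \<Rightarrow> nat \<Rightarrow> (nat \<Rightarrow> nat) \<Rightarrow> nat" where
  "from_digits p r e = (\<Sum>i<r. e i * p ^ i)"

lemma from_digits_less: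
  assumes "\<forall>i<r. e i < p"
  shows "from_digits p r e < p ^ r"
  using assms
proof (induction r)
  case 0 then show ?case by (simp add: from_digits_def)
next
  case (Suc r)
  have "from_digits p (Suc r) e = from_digits p r e + e r * p ^ r" by (simp add: from_digits_def)
  also have "\<dots> < Suc (e r) * p ^ r" using Suc by simp
  also have "\<dots> \<le> p * p ^ r" using Suc.prems by (intro mult_right_mono) auto
  finally show ?case by simp
qed

lemma from_digits_digits:
  assumes "0 < p"
  shows "from_digits p r (\<lambda>i. n div p ^ i mod p) = n mod p ^ r"
proof (induction r)
  case 0 then show ?case by (simp add: from_digits_def)
next
  case (Suc r)
  have "from_digits p (Suc r) (\<lambda>i. n div p ^ i mod p) = n mod p ^ r + n div p ^ r mod p * p ^ r"
    using Suc by (simp add: from_digits_def)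
  also have "\<dots> = n mod (p ^ r * p)" by (simp add: mod_mult2_eq)
  finally show ?case by (simp add: mult.commute)
qed

lemma from_digits_inj:
  assumes "\<forall>i<r. e i < p" "\<forall>i<r. e' i < p" "from_digits p r e = from_digits p r e'" "i < r"
  shows "e i = e' i"
  using assms
proof (induction r arbitrary: i)
  case 0 then show ?case by simp
next
  case (Suc r)
  have less: "from_digits p r e < p ^ r" "from_digits p r e' < p ^ r"
    using from_digits_less Suc.prems by auto
  then have pos: "p ^ r \<noteq> 0" by (metis less_nat_zero_code)
  have eq: "from_digits p r e + e r * p ^ r = from_digits p r e' + e' r * p ^ r"
    using Suc.prems by (simp add: from_digits_def)
  have "(from_digits p r e + e r * p ^ r) div p ^ r = (from_digits p r e' + e' r * p ^ r) div p ^ r"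
    "(from_digits p r e + e r * p ^ r) mod p ^ r = (from_digits p r e' + e' r * p ^ r) mod p ^ r"
    by (simp_all only: eq)
  then have "e r = e' r" and low: "from_digits p r e = from_digits p r e'"
    using less pos by simp_all
  show ?case
  proof (cases "i = r")
    case False
    then have "i < r" using Suc.prems(4) by simp
    with Suc.IH[OF _ _ low] Suc.prems(1,2) show ?thesis by simp
  qed (simp add: \<open>e r = e' r\<close>)
qed

lemma bij_betw_from_digits_exps:
  assumes "0 < p"
  shows "bij_betw (from_digits p r) (exps p r) {..<p ^ r}"
proof (rule bij_betw_imageI)
  show "inj_on (from_digits p r) (exps p r)"
  proof (rule inj_onI, rule ext)
    fix e e' i
    assume "e \<in> exps p r" "e' \<in> exps p r" "from_digits p r e = from_digits p r e'"
    then show "e i = e' i"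
      using from_digits_inj[of r e p e' i] by (cases "i < r") (simp_all add: exps_def)
  qed
  show "from_digits p r ` exps p r = {..<p ^ r}"
  proof (intro equalityI subsetI)
    fix n assume "n \<in> from_digits p r ` exps p r"
    then show "n \<in> {..<p ^ r}" using from_digits_less by (auto simp: exps_def)
  next
    fix n assume n: "n \<in> {..<p ^ r}"
    define e where "e i = (if i < r then n div p ^ i mod p else 0)" for i
    have "from_digits p r e = from_digits p r (\<lambda>i. n div p ^ i mod p)"
      unfolding from_digits_def e_def by (rule sum.cong) auto
    then have "from_digits p r e = n" using from_digits_digits[OF assms] n by simp
    moreover have "e \<in> exps p r" using assms by (simp add: exps_def e_def)
    ultimately show "n \<in> from_digits p r ` exps p r" by blast
  qed
qed

lemma of_nat_fact_nonzero:
  assumes "prime CHAR('k::semiring_1)" "n < CHAR('k)"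
  shows "(of_nat (fact n) :: 'k) \<noteq> 0"
  using assms by (simp add: of_nat_eq_0_iff_char_dvd prime_dvd_fact_iff)

definition fact_weight :: "nat \<Rightarrow> (nat \<Rightarrow> nat) \<Rightarrow> 'k::field" where
  "fact_weight r e = of_nat (\<Prod>i<r. fact (e i))"

lemma fact_weight_nonzero:
  assumes "prime CHAR('k::field)" "p = CHAR('k)" "e \<in> exps p r"
  shows "(fact_weight r e :: 'k) \<noteq> 0"
  using assms of_nat_fact_nonzero[of "e _"] by (auto simp: fact_weight_def exps_def of_nat_prod)

lemma umon_eq_dirac:
  assumes "prime CHAR('k::field)" "p = CHAR('k)" "e \<in> exps p r"
  shows "umon p r e = dirac (from_digits p r e) (fact_weight r e :: 'k)"
proof -
  have "\<forall>i<r. e i < p" using assms(3) by (simp add: exps_def)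
  then show ?thesis
  proof (induction r)
    case 0
    then show ?case by (simp add: gunit_eq_dirac from_digits_def fact_weight_def)
  next
    case (Suc r)
    have "from_digits p r e < p ^ r" using from_digits_less Suc.prems by simp
    then have "(of_nat ((from_digits p r e + e r * p ^ r) choose from_digits p r e) :: 'k) = 1"
      using binomial_digits_CHAR[OF assms(1), of "p ^ r" r "from_digits p r e" "from_digits p r e" "e r" 0]
        assms(2) by simp
    then show ?case
      using Suc by (simp add: gpow_u[OF assms(1,2)] conv_dirac from_digits_def fact_weight_def
          mult.commute)
  qed
qed

lemma sum_umon_at_from_digits:
  assumes "prime CHAR('k::field)" "p = CHAR('k)" "e \<in> exps p r"
  shows "(\<Sum>e'\<in>exps p r. c e' * umon p r e' (from_digits p r e)) = c e * (fact_weight r e :: 'k)"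
proof -
  have bij: "bij_betw (from_digits p r) (exps p r) {..<p ^ r}"
    using assms(1,2) prime_gt_0_nat bij_betw_from_digits_exps by simp
  have "(\<Sum>e'\<in>exps p r. c e' * umon p r e' (from_digits p r e))
      = (\<Sum>e'\<in>exps p r. if e' = e then c e * fact_weight r e else 0)"
    using bij_betw_imp_inj_on[OF bij] assms
    by (intro sum.cong) (auto simp: umon_eq_dirac dirac_def dest: inj_onD)
  then show ?thesis using bij_betw_finite[OF bij] assms(3) by simp
qed

lemma umon_vanish_above:
  assumes "prime CHAR('k::field)" "p = CHAR('k)" "e \<in> exps p r" "p ^ r \<le> n"
  shows "umon p r e n = (0 :: 'k)"
proof -
  have "from_digits p r e < p ^ r" using assms(3) from_digits_less by (simp add: exps_def)
  then show ?thesis using assms by (simp add: umon_eq_dirac dirac_def)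
qed

lemma umon_coordinates:
  fixes \<phi> :: "nat \<Rightarrow> 'k::field"
  assumes "prime CHAR('k)" "p = CHAR('k)" and vanish: "\<forall>n\<ge>p ^ r. \<phi> n = 0"
  defines "c0 \<equiv> \<lambda>e. if e \<in> exps p r then \<phi> (from_digits p r e) / fact_weight r e else 0"
  shows "(THE c. (\<forall>e. e \<notin> exps p r \<longrightarrow> c e = 0) \<and>
                 (\<forall>n. \<phi> n = (\<Sum>e\<in>exps p r. c e * umon p r e n))) = c0"
proof (rule the_equality)
  show "(\<forall>e. e \<notin> exps p r \<longrightarrow> c0 e = 0) \<and> (\<forall>n. \<phi> n = (\<Sum>e\<in>exps p r. c0 e * umon p r e n))"
  proof (intro conjI allI impI)
    fix e assume "e \<notin> exps p r"
    then show "c0 e = 0" by (simp add: c0_def)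
  next
    fix n show "\<phi> n = (\<Sum>e\<in>exps p r. c0 e * umon p r e n)"
    proof (cases "n < p ^ r")
      case True
      then obtain e where e: "e \<in> exps p r" "n = from_digits p r e"
        using assms(1,2) prime_gt_0_nat bij_betw_from_digits_exps[of p r] by (auto simp: bij_betw_def)
      then have "\<phi> n = c0 e * fact_weight r e"
        using fact_weight_nonzero[OF assms(1,2)] by (simp add: c0_def)
      then show ?thesis using sum_umon_at_from_digits[OF assms(1,2) e(1)] e(2) by simp
    next
      case False
      then have "umon p r e n = (0 :: 'k)" if "e \<in> exps p r" for e
        using umon_vanish_above[OF assms(1,2) that] by simp
      then show ?thesis using False vanish by simp
    qed
  qed
next
  fix c
  assume c: "(\<forall>e. e \<notin> exps p r \<longrightarrow> c e = 0) \<and> (\<forall>n. \<phi> n = (\<Sum>e\<in>exps p r. c e * umon p r e n))"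
  show "c = c0"
  proof
    fix e show "c e = c0 e"
      using c sum_umon_at_from_digits[OF assms(1,2), where e = e and c = c]
        fact_weight_nonzero[OF assms(1,2), of e]
      by (cases "e \<in> exps p r") (auto simp: c0_def)
  qed
qed

lemma linear_part_eq:
  fixes \<phi> :: "nat \<Rightarrow> 'k::field"
  assumes "prime CHAR('k)" "p = CHAR('k)" "\<forall>n\<ge>p ^ r. \<phi> n = 0"
  shows "linear_part p r \<phi> = ulin p r (\<lambda>i. \<phi> (p ^ i))"
proof -
  have "from_digits p r (unitvec i) = (\<Sum>j<r. if j = i then p ^ i else 0)" for i
    unfolding from_digits_def unitvec_def by (rule sum.cong) auto
  moreover have "unitvec i \<in> exps p r" if "i < r" for i
    using that assms(1,2) prime_gt_1_nat[of p] by (simp add: exps_def unitvec_def)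
  moreover have "fact_weight r (unitvec i) = (1 :: 'k)" for i
    by (simp add: fact_weight_def unitvec_def prod.neutral)
  ultimately show ?thesis
    unfolding linear_part_def Let_def umon_coordinates[OF assms] ulin_def by simp
qed

lemma pcompose_monom_one: "pcompose (monom 1 n) q = q ^ n"
  for q :: "'a::comm_semiring_1 poly"
proof (induction n)
  case (Suc n)
  have "monom 1 (Suc n) = [:0, 1:] * (monom 1 n :: 'a poly)" by (simp add: monom_Suc)
  then show ?case using Suc by (simp add: pcompose_mult pcompose_pCons)
qed (simp add: pcompose_1 one_pCons)

lemma coeff_power_eq_0_below:
  assumes "coeff q 0 = 0" "k < n"
  shows "coeff (q ^ n :: 'a::comm_semiring_1 poly) k = 0"
proof -
  have "monom 1 1 dvd q" using assms(1) by (simp add: monom_1_dvd_iff')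
  then have "monom 1 n dvd q ^ n" by (metis dvd_power_same monom_power mult_1 power_one)
  then show ?thesis using assms(2) by (simp add: monom_1_dvd_iff')
qed

lemma push_r_u:
  assumes "1 < p" "i < r"
  shows "push_r p r q (u p i) n = coeff (q ^ n) (p ^ i)"
proof -
  have "push_r p r q (u p i) n = (\<Sum>m<p ^ r. if m = p ^ i then coeff (q ^ n) m else 0)"
    unfolding push_r_def u_def by (rule sum.cong) (auto simp: pcompose_monom_one)
  moreover have "p ^ i < p ^ r" using assms by (simp add: power_strict_increasing)
  ultimately show ?thesis by simp
qed

lemma sigma_power_CHAR:
  assumes "prime CHAR('k::field)" "p = CHAR('k)"
  shows "sigma p b ^ p ^ i = (\<Sum>s<length b. monom ((b ! s :: 'k) ^ p ^ i) (p ^ (s + i)))"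
  unfolding sigma_def using assms
  by (simp add: freshmans_dream_sum' monom_power power_add)

lemma coeff_sigma_power_CHAR:
  assumes "prime CHAR('k::field)" "p = CHAR('k)"
  shows "coeff (sigma p b ^ p ^ i) (p ^ j)
    = (if i \<le> j \<and> j - i < length b then (b ! (j - i) :: 'k) ^ p ^ i else 0)"
proof -
  have p: "1 < p" using assms prime_gt_1_nat by simp
  have "coeff (sigma p b ^ p ^ i) (p ^ j)
      = (\<Sum>s<length b. if p ^ (s + i) = p ^ j then b ! s ^ p ^ i else 0)"
    by (simp add: sigma_power_CHAR[OF assms] coeff_sum coeff_monom)
  also have "\<dots> = (\<Sum>s<length b. if s = j - i \<and> i \<le> j then b ! (j - i) ^ p ^ i else 0)"
    using p by (intro sum.cong) (auto simp: power_inject_exp)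
  also have "\<dots> = (if i \<le> j \<and> j - i < length b then b ! (j - i) ^ p ^ i else 0)"
    by (cases "i \<le> j") simp_all
  finally show ?thesis .
qed

lemma linear_part_push_sigma:
  assumes "prime CHAR('k::field)" "p = CHAR('k)" "0 < r" "length b = r"
  shows "linear_part p r (push_r p r (sigma p b) (u p (r - 1)))
    = ulin p r (\<lambda>i. (b ! (r - 1 - i) :: 'k) ^ p ^ i)"
proof -
  have p: "1 < p" using assms(1,2) prime_gt_1_nat by simp
  have push: "push_r p r (sigma p b) (u p (r - 1)) n = coeff (sigma p b ^ n) (p ^ (r - 1))" for n
    using push_r_u[OF p, of "r - 1" r] assms(3) by simp
  have vanish: "\<forall>n\<ge>p ^ r. push_r p r (sigma p b) (u p (r - 1)) n = 0"
  proof (intro allI impI)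
    fix n assume "p ^ r \<le> n"
    moreover have "p ^ (r - 1) < p ^ r" using p assms(3) by (simp add: power_strict_increasing)
    moreover have "coeff (sigma p b) 0 = 0" using p by (simp add: sigma_def coeff_sum coeff_monom)
    ultimately have "coeff (sigma p b ^ n) (p ^ (r - 1)) = 0"
      by (intro coeff_power_eq_0_below) simp_all
    then show "push_r p r (sigma p b) (u p (r - 1)) n = 0" by (simp only: push)
  qed
  have "push_r p r (sigma p b) (u p (r - 1)) (p ^ i) = b ! (r - 1 - i) ^ p ^ i" if "i < r" for i
    unfolding push using that assms(4) by (simp add: coeff_sigma_power_CHAR[OF assms(1,2)])
  then show ?thesis
    unfolding linear_part_eq[OF assms(1,2) vanish] ulin_def by (intro ext sum.cong) auto
qed

lemma act_cong_below_degree: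
  assumes "degree_less D N" "\<forall>n<N. \<phi> n = \<psi> n"
  shows "act scale D \<phi> m = act scale D \<psi> m"
  unfolding act_def
proof (rule sum.cong[OF refl])
  fix n assume "n \<in> {n. D n m \<noteq> 0}"
  then have "n < N" using assms(1) by (auto simp: degree_less_def not_less[symmetric])
  then show "scale (\<phi> n) (D n m) = scale (\<psi> n) (D n m)" using assms(2) by simp
qed

lemma ulin_below_power:
  assumes "1 < p" "n < p ^ r"
  shows "ulin p L c n = ulin p (min L r) c n"
  unfolding ulin_def
proof (rule sum.mono_neutral_right)
  show "\<forall>s\<in>{..<L} - {..<min L r}. c s * u p s n = 0"
  proof
    fix s assume "s \<in> {..<L} - {..<min L r}"
    then have "r \<le> s" by (auto simp: min_def split: if_splits)
    then have "p ^ r \<le> p ^ s" using assms(1) by (simp add: power_increasing)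
    then show "c s * u p s n = 0" using assms(2) by (simp add: u_def)
  qed
qed auto

lemma act_sigma_truncate:
  assumes "1 < p" "degree_less D (p ^ r)"
  shows "act scale D (ulin p (length a) (\<lambda>s. (a ! s) ^ p ^ s)) m
    = act scale D (ulin p r (\<lambda>s. seq_nth a s ^ p ^ s)) m"
proof (rule act_cong_below_degree[OF assms(2)], intro allI impI)
  fix n assume n: "n < p ^ r"
  have "ulin p (length a) (\<lambda>s. (a ! s) ^ p ^ s) n = ulin p (min (length a) r) (\<lambda>s. (a ! s) ^ p ^ s) n"
    by (rule ulin_below_power[OF assms(1) n])
  also have "\<dots> = ulin p (min (length a) r) (\<lambda>s. seq_nth a s ^ p ^ s) n"
    unfolding ulin_def by (rule sum.cong) (auto simp: seq_nth_def)
  also have "\<dots> = ulin p r (\<lambda>s. seq_nth a s ^ p ^ s) n"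
    unfolding ulin_def
    by (rule sum.mono_neutral_left) (use assms(1) in \<open>auto simp: seq_nth_def\<close>)
  finally show "ulin p (length a) (\<lambda>s. (a ! s) ^ p ^ s) n = ulin p r (\<lambda>s. seq_nth a s ^ p ^ s) n" .
qed

theorem proposition3p8:
  fixes scale :: "'k::field \<Rightarrow> 'm::ab_group_add \<Rightarrow> 'm"
    and D :: "nat \<Rightarrow> 'm \<Rightarrow> 'm"
    and p r :: nat
    and a :: "'k list"
  assumes p_prime: "prime p"
    and char_p: "CHAR('k) = p"
    and alg_closed: "\<forall>f :: 'k poly. 0 < degree f \<longrightarrow> (\<exists>x. poly f x = 0)"
    and r_pos: "0 < r"
    and M: "Ga_module scale D"
    and deg: "degree_less D (p ^ r)"
  defines "b \<equiv> map (\<lambda>j. seq_nth a (r - 1 - j)) [0..<r]"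
  shows "(\<forall>m. act scale D (ulin p (length a) (\<lambda>s. (a ! s) ^ (p ^ s))) m
              = act scale D (ulin p r (\<lambda>i. (b ! (r - 1 - i)) ^ (p ^ i))) m)
     \<and> linear_part p r (push_r p r (sigma p b) (u p (r - 1)))
         = ulin p r (\<lambda>i. (b ! (r - 1 - i)) ^ (p ^ i))"
proof
  have char: "prime CHAR('k)" "p = CHAR('k)" using p_prime char_p by simp_all
  have "ulin p r (\<lambda>i. (b ! (r - 1 - i)) ^ p ^ i) = ulin p r (\<lambda>s. seq_nth a s ^ p ^ s)"
    unfolding ulin_def b_def by (intro ext sum.cong) auto
  moreover have "act scale D (ulin p (length a) (\<lambda>s. (a ! s) ^ p ^ s)) m
      = act scale D (ulin p r (\<lambda>s. seq_nth a s ^ p ^ s)) m" for m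
    by (rule act_sigma_truncate[OF prime_gt_1_nat[OF p_prime] deg])
  ultimately show "\<forall>m. act scale D (ulin p (length a) (\<lambda>s. (a ! s) ^ (p ^ s))) m
              = act scale D (ulin p r (\<lambda>i. (b ! (r - 1 - i)) ^ (p ^ i))) m"
    by simp
  show "linear_part p r (push_r p r (sigma p b) (u p (r - 1))) = ulin p r (\<lambda>i. (b ! (r - 1 - i)) ^ (p ^ i))"
    using linear_part_push_sigma[OF char r_pos] by (simp add: b_def)
qed

end
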